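(* The $\mathcal K(2)$-module $\operatorname{gr}\mathcal D_{\lambda\mu}=\bigoplus_{i\ge0}\operatorname{gr}^{i/2}\mathcal D_{\lambda\mu}$ depends only on $\mu-\lambda$: if $\mu-\lambda=\mu'-\lambda'$ then $\operatorname{gr}\mathcal D_{\lambda\mu}\cong\operatorname{gr}\mathcal D_{\lambda'\mu'}$ as $\mathcal K(2)$-modules.
   Context: $C^\infty(S^{1|2})$ consists of $f=f_0(x)+\xi_1f_1(x)+\xi_2f_2(x)+\xi_1\xi_2f_{12}(x)$ with smooth complex-valued coefficients on the circle and odd Grassmann variables $\xi_1,\xi_2$; parity $p(x)=0,p(\xi_i)=1$; $f'=\partial_xf$. $\overline D_i=\partial_{\xi_i}-\xi_i\partial_x$. For homogeneous $f$, $X_f=f\partial_x-(-1)^{p(f)}\tfrac12(\overline D_1(f)\overline D_1+\overline D_2(f)\overline D_2)$; $\mathcal K(2)$ is the Lie superalgebra of all such $X_f$. $\mathcal F_\lambda$ is $C^\infty(S^{1|2})$ with action $L^\lambda_{X_f}=X_f+\lambda f'$. $\mathcal D_{\lambda\mu}$: linear differential operators $\mathcal F_\lambda\to\mathcal F_\mu$ with action $\mathcal L_{X_f}(A)=L^\mu_{X_f}\circ A-(-1)^{p(f)p(A)}A\circ L^\lambda_{X_f}$; each is a finite sum $\sum a_{\ell,m,n}\partial_x^\ell\overline D_1^m\overline D_2^n$, $m,n\in\{0,1\}$. For $k\in\frac12\mathbb Z_{\ge0}$, $\mathcal D^k_{\lambda\mu}$ consists of such sums with $\ell+\frac m2+\frac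 n2\le k$; it is $\mathcal K(2)$-stable, and $\operatorname{gr}^k\mathcal D_{\lambda\mu}=\mathcal D^k_{\lambda\mu}/\mathcal D^{k-1/2}_{\lambda\mu}$ (with $\mathcal D^{-1/2}=0$) carries the induced action. *)

theory Defs
  imports "HOL-Analysis.Analysis" "HOL-Library.Function_Algebras"
begin

text \<open>Superfunctions on S^(1|2): F m n is the coefficient of xi1^m xi2^n,
  so f = F False False + xi1 F True False + xi2 F False True + xi1 xi2 F True True.
  The circle is R / 2 pi Z; coefficients are smooth 2pi-periodic complex functions.\<close>

type_synonym sfun = "bool \<Rightarrow> bool \<Rightarrow> real \<Rightarrow> complex"
type_synonym sop = "sfun \<Rightarrow> sfun"

definition vderiv :: "(real \<Rightarrow> complex) \<Rightarrow> real \<Rightarrow> complex" where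
  "vderiv u = (\<lambda>x. vector_derivative u (at x))"

definition smooth_circ :: "(real \<Rightarrow> complex) \<Rightarrow> bool" where
  "smooth_circ u \<longleftrightarrow> (\<forall>k x. (vderiv ^^ k) u differentiable (at x)) \<and> (\<forall>x. u (x + 2 * pi) = u x)"

definition Cinf :: "sfun set" where
  "Cinf = {F. \<forall>m n. smooth_circ (F m n)}"

definition sscale :: "complex \<Rightarrow> sfun \<Rightarrow> sfun" where
  "sscale c F = (\<lambda>m n x. c * F m n x)"

text \<open>Grassmann product (coefficients commute, xi1 xi2 = - xi2 xi1).\<close>
definition smul :: "sfun \<Rightarrow> sfun \<Rightarrow> sfun" where
  "smul F G = (\<lambda>m n x.
     if \<not> m \<and> \<not> n then F False False x * G False False x
     else if m \<and> \<not> n then F False False x * G True False x + F True False x * G False False x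
     else if \<not> m \<and> n then F False False x * G False True x + F False True x * G False False x
     else F False False x * G True True x + F True True x * G False False x
          + F True False x * G False True x - F False True x * G True False x)"

definition dx :: "sfun \<Rightarrow> sfun" where
  "dx F = (\<lambda>m n. vderiv (F m n))"

definition xi1 :: sfun where "xi1 = (\<lambda>m n x. if m \<and> \<not> n then 1 else 0)"
definition xi2 :: sfun where "xi2 = (\<lambda>m n x. if \<not> m \<and> n then 1 else 0)"

text \<open>Left derivatives in the odd variables.\<close>
definition dxi1 :: "sfun \<Rightarrow> sfun" where
  "dxi1 F = (\<lambda>m n. if m then 0 else F True n)"
definition dxi2 :: "sfun \<Rightarrow> sfun" where
  "dxi2 F = (\<lambda>m n. if n then 0 else if m then - F True True else F False True)"

definition Dbar1 :: "sfun \<Rightarrow> sfun" where "Dbar1 F = dxi1 F - smul xi1 (dx F)"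
definition Dbar2 :: "sfun \<Rightarrow> sfun" where "Dbar2 F = dxi2 F - smul xi2 (dx F)"

definition evp :: "sfun \<Rightarrow> sfun" where "evp F = (\<lambda>m n. if m = n then F m n else 0)"
definition odp :: "sfun \<Rightarrow> sfun" where "odp F = (\<lambda>m n. if m = n then 0 else F m n)"

definition psign :: "bool \<Rightarrow> complex" where "psign p = (if p then -1 else 1)"

text \<open>X_f for f homogeneous of parity p, and L^lambda_{X_f} = X_f + lambda f'.\<close>
definition Xh :: "sfun \<Rightarrow> bool \<Rightarrow> sfun \<Rightarrow> sfun" where
  "Xh f p g = smul f (dx g)
     - sscale (psign p / 2) (smul (Dbar1 f) (Dbar1 g) + smul (Dbar2 f) (Dbar2 g))"

definition Lh :: "complex \<Rightarrow> sfun \<Rightarrow> bool \<Rightarrow> sfun \<Rightarrow> sfun" where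
  "Lh lam f p g = Xh f p g + sscale lam (smul (dx f) g)"

text \<open>Operators F_lambda -> F_mu are maps on C^infty(S^(1|2)), made canonical by
  being zero outside C^infty.\<close>
definition restr :: "sop \<Rightarrow> sop" where
  "restr A = (\<lambda>g. if g \<in> Cinf then A g else 0)"

definition op_ev :: "sop \<Rightarrow> sop" where
  "op_ev A = restr (\<lambda>g. evp (A (evp g)) + odp (A (odp g)))"
definition op_od :: "sop \<Rightarrow> sop" where
  "op_od A = restr (\<lambda>g. odp (A (evp g)) + evp (A (odp g)))"

definition Lact_h :: "complex \<Rightarrow> complex \<Rightarrow> sfun \<Rightarrow> bool \<Rightarrow> sop \<Rightarrow> bool \<Rightarrow> sop" where
  "Lact_h lam mu f p A q =
     restr (\<lambda>g. Lh mu f p (A g) - sscale (psign (p \<and> q)) (A (Lh lam f p g)))"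

definition Lact :: "complex \<Rightarrow> complex \<Rightarrow> sfun \<Rightarrow> sop \<Rightarrow> sop" where
  "Lact lam mu f A =
       Lact_h lam mu (evp f) False (op_ev A) False + Lact_h lam mu (evp f) False (op_od A) True
     + Lact_h lam mu (odp f) True (op_ev A) False + Lact_h lam mu (odp f) True (op_od A) True"

definition monop :: "nat \<Rightarrow> bool \<Rightarrow> bool \<Rightarrow> sfun \<Rightarrow> sfun" where
  "monop l m n g = (dx ^^ l) ((if m then Dbar1 else id) ((if n then Dbar2 else id) g))"

text \<open>Dord j = D^{j/2}: sums of a_{l,m,n} dx^l Dbar1^m Dbar2^n with l + m/2 + n/2 <= j/2.\<close>
definition Dord :: "nat \<Rightarrow> sop set" where
  "Dord j = {A. \<exists>a. (\<forall>l m n. a l m n \<in> Cinf) \<and>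
      A = restr (\<lambda>g. \<Sum>(l, m, n) \<in> {(l, m, n). 2 * l + of_bool m + of_bool n \<le> j}.
                        smul (a l m n) (monop l m n g))}"

text \<open>Dlow j = D^{j/2 - 1/2}, with D^{-1/2} = 0.\<close>
definition Dlow :: "nat \<Rightarrow> sop set" where
  "Dlow j = (if j = 0 then {0} else Dord (j - 1))"

text \<open>gr D = direct sum over j of D^{j/2} / D^{j/2-1/2}, represented by families of
  representatives Q j in D^{j/2}, almost all in D^{j/2-1/2}, modulo grel.\<close>
definition GR :: "(nat \<Rightarrow> sop) set" where
  "GR = {Q. (\<forall>j. Q j \<in> Dord j) \<and> finite {j. Q j \<notin> Dlow j}}"

definition grel :: "(nat \<Rightarrow> sop) \<Rightarrow> (nat \<Rightarrow> sop) \<Rightarrow> bool" where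
  "grel Q R \<longleftrightarrow> (\<forall>j. Q j - R j \<in> Dlow j)"

definition gscale :: "complex \<Rightarrow> (nat \<Rightarrow> sop) \<Rightarrow> nat \<Rightarrow> sop" where
  "gscale c Q = (\<lambda>j g. sscale c (Q j g))"

definition gev :: "(nat \<Rightarrow> sop) \<Rightarrow> nat \<Rightarrow> sop" where
  "gev Q = (\<lambda>j. op_ev (Q j))"

definition gr_act :: "complex \<Rightarrow> complex \<Rightarrow> sfun \<Rightarrow> (nat \<Rightarrow> sop) \<Rightarrow> nat \<Rightarrow> sop" where
  "gr_act lam mu f Q = (\<lambda>j. Lact lam mu f (Q j))"

text \<open>An (even, C-linear) isomorphism of K(2)-modules gr D_{lam mu} -> gr D_{lam' mu'},
  expressed on representatives.\<close>
definition gr_iso :: "complex \<Rightarrow> complex \<Rightarrow> complex \<Rightarrow> complex \<Rightarrow> bool" where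
  "gr_iso lam mu lam' mu' \<longleftrightarrow> (\<exists>\<Phi>.
      (\<forall>Q\<in>GR. \<Phi> Q \<in> GR)
    \<and> (\<forall>Q\<in>GR. \<forall>R\<in>GR. grel Q R \<longleftrightarrow> grel (\<Phi> Q) (\<Phi> R))
    \<and> (\<forall>R\<in>GR. \<exists>Q\<in>GR. grel (\<Phi> Q) R)
    \<and> (\<forall>Q\<in>GR. \<forall>R\<in>GR. grel (\<Phi> (Q + R)) (\<Phi> Q + \<Phi> R))
    \<and> (\<forall>c. \<forall>Q\<in>GR. grel (\<Phi> (gscale c Q)) (gscale c (\<Phi> Q)))
    \<and> (\<forall>Q\<in>GR. grel (\<Phi> (gev Q)) (gev (\<Phi> Q)))
    \<and> (\<forall>f\<in>Cinf. \<forall>Q\<in>GR. grel (\<Phi> (gr_act lam mu f Q)) (gr_act lam' mu' f (\<Phi> Q))))"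

end

theory Submission
  imports Defs
begin

text \<open>The identity on representatives is the isomorphism. Since \<lambda> - \<lambda>' = \<mu> - \<mu>',
  for homogeneous f and A the two actions on A differ by (\<mu> - \<mu>') [f', A], where
  [h, A] = h A - (-1)^(p(h) p(A)) A h is the supercommutator with multiplication by h.
  By the super Leibniz rules for \<partial>_x, Dbar_1, Dbar_2, moving a multiplication operator past
  a monomial \<partial>_x^l Dbar_1^m Dbar_2^n leaves only monomials of smaller weight 2l + m + n,
  so [f', A] lies one filtration step below A and the two actions agree on gr.\<close>

section \<open>Smooth functions on the circle\<close>

definition smooth :: "(real \<Rightarrow> complex) \<Rightarrow> bool" where
  "smooth u \<longleftrightarrow> (\<forall>k x. (vderiv ^^ k) u differentiable (at x))"

definition differentiable_upto :: "nat \<Rightarrow> (real \<Rightarrow> complex) \<Rightarrow> bool" where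
  "differentiable_upto k u \<longleftrightarrow> (\<forall>j\<le>k. \<forall>x. (vderiv ^^ j) u differentiable (at x))"

lemma funpow_vderiv_Suc: "(vderiv ^^ Suc k) u = (vderiv ^^ k) (vderiv u)"
  by (simp add: funpow_swap1)

lemma smooth_vderiv: "smooth u \<Longrightarrow> smooth (vderiv u)"
  unfolding smooth_def by (metis funpow_vderiv_Suc)

lemma smooth_imp_differentiable: "smooth u \<Longrightarrow> u differentiable (at x)"
  unfolding smooth_def by (metis funpow_0)

lemma smooth_iff_differentiable_upto: "smooth u \<longleftrightarrow> (\<forall>k. differentiable_upto k u)"
  unfolding smooth_def differentiable_upto_def by blast

lemma differentiable_upto_imp_differentiable: "differentiable_upto k u \<Longrightarrow> u differentiable (at x)"
  unfolding differentiable_upto_def by (metis funpow_0 le0)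

lemma differentiable_upto_vderiv: "differentiable_upto (Suc k) u \<Longrightarrow> differentiable_upto k (vderiv u)"
  unfolding differentiable_upto_def by (metis Suc_le_mono funpow_vderiv_Suc)

lemma differentiable_upto_SucI:
  assumes "\<And>x. u differentiable (at x)" and "differentiable_upto k (vderiv u)"
  shows "differentiable_upto (Suc k) u"
  unfolding differentiable_upto_def
proof (intro allI impI)
  fix j x assume j: "j \<le> Suc k"
  show "(vderiv ^^ j) u differentiable (at x)"
  proof (cases j)
    case 0 then show ?thesis using assms(1) by simp
  next
    case (Suc j')
    then show ?thesis
      using j assms(2) unfolding differentiable_upto_def by (simp only: funpow_vderiv_Suc)
  qed
qed

lemma vderiv_add: "(\<And>x. u differentiable (at x)) \<Longrightarrow> (\<And>x. v differentiable (at x)) \<Longrightarrow>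
   vderiv (\<lambda>x. u x + v x) = (\<lambda>x. vderiv u x + vderiv v x)"
  unfolding vderiv_def by (rule ext) simp

lemma vderiv_diff: "(\<And>x. u differentiable (at x)) \<Longrightarrow> (\<And>x. v differentiable (at x)) \<Longrightarrow>
   vderiv (\<lambda>x. u x - v x) = (\<lambda>x. vderiv u x - vderiv v x)"
  unfolding vderiv_def by (rule ext) simp

lemma vderiv_mult: "(\<And>x. u differentiable (at x)) \<Longrightarrow> (\<And>x. v differentiable (at x)) \<Longrightarrow>
   vderiv (\<lambda>x. u x * v x) = (\<lambda>x. vderiv u x * v x + u x * vderiv v x)"
  unfolding vderiv_def by (rule ext) (simp add: add.commute)

lemma vderiv_cmult: "(\<And>x. u differentiable (at x)) \<Longrightarrow> vderiv (\<lambda>x. c * u x) = (\<lambda>x. c * vderiv u x)"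
  unfolding vderiv_def
  by (rule ext) (simp add: vector_derivative_at vector_derivative_works[symmetric]
      has_vector_derivative_mult_right)

lemma vderiv_const: "vderiv (\<lambda>x. c) = (\<lambda>x. 0)"
  unfolding vderiv_def by (rule ext) (simp add: vector_derivative_at)

lemma vderiv_zero: "vderiv 0 = 0"
  using vderiv_const[of 0] by (simp add: zero_fun_def)

lemma differentiable_upto_add:
  "differentiable_upto k u \<Longrightarrow> differentiable_upto k v \<Longrightarrow> differentiable_upto k (\<lambda>x. u x + v x)"
proof (induction k arbitrary: u v)
  case 0 then show ?case
    unfolding differentiable_upto_def by (auto intro!: differentiable_add dest: differentiable_upto_imp_differentiable)
next
  case (Suc k)
  then have "\<And>x. u differentiable (at x)" "\<And>x. v differentiable (at x)"
    by (auto intro: differentiable_upto_imp_differentiable)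
  moreover from Suc have "differentiable_upto k (\<lambda>x. vderiv u x + vderiv v x)"
    by (blast dest: differentiable_upto_vderiv)
  ultimately show ?case by (intro differentiable_upto_SucI) (auto simp: vderiv_add)
qed

lemma differentiable_upto_diff:
  "differentiable_upto k u \<Longrightarrow> differentiable_upto k v \<Longrightarrow> differentiable_upto k (\<lambda>x. u x - v x)"
proof (induction k arbitrary: u v)
  case 0 then show ?case
    unfolding differentiable_upto_def by (auto intro!: differentiable_diff dest: differentiable_upto_imp_differentiable)
next
  case (Suc k)
  then have "\<And>x. u differentiable (at x)" "\<And>x. v differentiable (at x)"
    by (auto intro: differentiable_upto_imp_differentiable)
  moreover from Suc have "differentiable_upto k (\<lambda>x. vderiv u x - vderiv v x)"
    by (blast dest: differentiable_upto_vderiv)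
  ultimately show ?case by (intro differentiable_upto_SucI) (auto simp: vderiv_diff)
qed

text \<open>The product rule raises the order of the factors, so the induction for products has to
  assume both factors smooth rather than only k times differentiable.\<close>

lemma differentiable_upto_mult: "smooth u \<Longrightarrow> smooth v \<Longrightarrow> differentiable_upto k (\<lambda>x. u x * v x)"
proof (induction k arbitrary: u v)
  case 0 then show ?case unfolding differentiable_upto_def by (simp add: smooth_imp_differentiable)
next
  case (Suc k)
  then have "\<And>x. u differentiable (at x)" "\<And>x. v differentiable (at x)"
    by (auto intro: smooth_imp_differentiable)
  moreover from Suc have "differentiable_upto k (\<lambda>x. vderiv u x * v x + u x * vderiv v x)"
    by (intro differentiable_upto_add) (blast intro: smooth_vderiv)+
  ultimately show ?case by (intro differentiable_upto_SucI) (auto simp: vderiv_mult)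
qed

lemma smooth_add: "smooth u \<Longrightarrow> smooth v \<Longrightarrow> smooth (\<lambda>x. u x + v x)"
  unfolding smooth_iff_differentiable_upto by (blast intro: differentiable_upto_add)

lemma smooth_diff: "smooth u \<Longrightarrow> smooth v \<Longrightarrow> smooth (\<lambda>x. u x - v x)"
  unfolding smooth_iff_differentiable_upto by (blast intro: differentiable_upto_diff)

lemma smooth_mult: "smooth u \<Longrightarrow> smooth v \<Longrightarrow> smooth (\<lambda>x. u x * v x)"
  by (simp add: smooth_iff_differentiable_upto differentiable_upto_mult)

lemma smooth_const: "smooth (\<lambda>x. c)"
proof -
  have "(vderiv ^^ k) (\<lambda>x. c) = (\<lambda>x. if k = 0 then c else 0)" for k
    by (induction k) (auto simp: vderiv_const)
  then show ?thesis unfolding smooth_def by simp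
qed

lemma periodic_vderiv:
  assumes per: "\<And>x. u (x + 2 * pi) = u x" and diff: "\<And>x. u differentiable (at x)"
  shows "vderiv u (x + 2 * pi) = vderiv u x"
proof -
  have shift: "u \<circ> (\<lambda>y. y + 2 * pi) = u" using per by auto
  have "vector_derivative (\<lambda>y::real. y + 2 * pi) (at x) = 1"
    by (rule vector_derivative_at) (auto intro!: derivative_eq_intros)
  then have "vector_derivative (u \<circ> (\<lambda>y. y + 2 * pi)) (at x) = vector_derivative u (at (x + 2 * pi))"
    using vector_derivative_chain_at[OF _ diff] by simp
  then show ?thesis unfolding vderiv_def shift by simp
qed

lemma smooth_circ_iff: "smooth_circ u \<longleftrightarrow> smooth u \<and> (\<forall>x. u (x + 2 * pi) = u x)"
  unfolding smooth_circ_def smooth_def by blast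

lemma smooth_circ_add: "smooth_circ u \<Longrightarrow> smooth_circ v \<Longrightarrow> smooth_circ (\<lambda>x. u x + v x)"
  unfolding smooth_circ_iff by (auto intro: smooth_add)

lemma smooth_circ_diff: "smooth_circ u \<Longrightarrow> smooth_circ v \<Longrightarrow> smooth_circ (\<lambda>x. u x - v x)"
  unfolding smooth_circ_iff by (auto intro: smooth_diff)

lemma smooth_circ_mult: "smooth_circ u \<Longrightarrow> smooth_circ v \<Longrightarrow> smooth_circ (\<lambda>x. u x * v x)"
  unfolding smooth_circ_iff by (auto intro: smooth_mult)

lemma smooth_circ_const: "smooth_circ (\<lambda>x. c)"
  unfolding smooth_circ_iff by (auto intro: smooth_const)

lemma smooth_circ_zero: "smooth_circ 0"
  using smooth_circ_const[of 0] by (simp add: zero_fun_def)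

lemma smooth_circ_cmult: "smooth_circ u \<Longrightarrow> smooth_circ (\<lambda>x. c * u x)"
  using smooth_circ_mult[OF smooth_circ_const] by blast

lemma smooth_circ_minus: "smooth_circ u \<Longrightarrow> smooth_circ (\<lambda>x. - u x)"
  using smooth_circ_diff[OF smooth_circ_const, of u 0] by simp

lemma smooth_circ_vderiv: "smooth_circ u \<Longrightarrow> smooth_circ (vderiv u)"
  unfolding smooth_circ_iff
  by (auto intro: smooth_vderiv periodic_vderiv smooth_imp_differentiable)

lemma sfun_eqI:
  assumes "\<And>x. F False False x = G False False x" "\<And>x. F True False x = G True False x"
    "\<And>x. F False True x = G False True x" "\<And>x. F True True x = G True True x"
  shows "F = G"
proof (intro ext)
  fix m n x show "F m n x = G m n x" using assms by (cases m; cases n) simp_all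
qed

lemma CinfI:
  assumes "smooth_circ (F False False)" "smooth_circ (F True False)"
    "smooth_circ (F False True)" "smooth_circ (F True True)"
  shows "F \<in> Cinf"
  unfolding Cinf_def
proof (intro CollectI allI)
  fix m n show "smooth_circ (F m n)" using assms by (cases m; cases n) simp_all
qed

lemma CinfD: "F \<in> Cinf \<Longrightarrow> smooth_circ (F m n)"
  unfolding Cinf_def by blast

lemma Cinf_differentiable: "F \<in> Cinf \<Longrightarrow> F m n differentiable (at x)"
  by (meson CinfD smooth_circ_iff smooth_imp_differentiable)

lemmas smooth_circ_intros = smooth_circ_add smooth_circ_diff smooth_circ_mult smooth_circ_const
  smooth_circ_zero smooth_circ_vderiv smooth_circ_cmult smooth_circ_minus CinfD

lemma Cinf_add: "F \<in> Cinf \<Longrightarrow> G \<in> Cinf \<Longrightarrow> F + G \<in> Cinf"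
  by (rule CinfI) (simp_all add: plus_fun_def smooth_circ_intros)
lemma Cinf_diff: "F \<in> Cinf \<Longrightarrow> G \<in> Cinf \<Longrightarrow> F - G \<in> Cinf"
  by (rule CinfI) (simp_all add: fun_diff_def smooth_circ_intros)
lemma Cinf_zero: "0 \<in> Cinf"
  by (rule CinfI) (simp_all add: zero_fun_def smooth_circ_intros)
lemma Cinf_sscale: "F \<in> Cinf \<Longrightarrow> sscale c F \<in> Cinf"
  by (rule CinfI) (simp_all add: sscale_def smooth_circ_intros)
lemma Cinf_smul: "F \<in> Cinf \<Longrightarrow> G \<in> Cinf \<Longrightarrow> smul F G \<in> Cinf"
  by (rule CinfI) (simp_all add: smul_def smooth_circ_intros)
lemma Cinf_dx: "F \<in> Cinf \<Longrightarrow> dx F \<in> Cinf"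
  by (rule CinfI) (simp_all add: dx_def smooth_circ_intros)
lemma Cinf_xi1: "xi1 \<in> Cinf"
  by (rule CinfI) (simp_all add: xi1_def smooth_circ_intros)
lemma Cinf_xi2: "xi2 \<in> Cinf"
  by (rule CinfI) (simp_all add: xi2_def smooth_circ_intros)
lemma Cinf_dxi1: "F \<in> Cinf \<Longrightarrow> dxi1 F \<in> Cinf"
  by (rule CinfI) (simp_all add: dxi1_def smooth_circ_intros)
lemma Cinf_dxi2: "F \<in> Cinf \<Longrightarrow> dxi2 F \<in> Cinf"
  by (rule CinfI) (simp_all add: dxi2_def smooth_circ_intros fun_Compl_def)
lemma Cinf_Dbar1: "F \<in> Cinf \<Longrightarrow> Dbar1 F \<in> Cinf"
  unfolding Dbar1_def by (intro Cinf_diff Cinf_dxi1 Cinf_smul Cinf_xi1 Cinf_dx)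
lemma Cinf_Dbar2: "F \<in> Cinf \<Longrightarrow> Dbar2 F \<in> Cinf"
  unfolding Dbar2_def by (intro Cinf_diff Cinf_dxi2 Cinf_smul Cinf_xi2 Cinf_dx)
lemma Cinf_evp: "F \<in> Cinf \<Longrightarrow> evp F \<in> Cinf"
  by (rule CinfI) (simp_all add: evp_def smooth_circ_intros)
lemma Cinf_odp: "F \<in> Cinf \<Longrightarrow> odp F \<in> Cinf"
  by (rule CinfI) (simp_all add: odp_def smooth_circ_intros)
lemma Cinf_dx_funpow: "F \<in> Cinf \<Longrightarrow> (dx ^^ l) F \<in> Cinf"
  by (induction l) (auto intro: Cinf_dx)
lemma Cinf_monop: "F \<in> Cinf \<Longrightarrow> monop l m n F \<in> Cinf"
  unfolding monop_def by (auto intro!: Cinf_dx_funpow Cinf_Dbar1 Cinf_Dbar2)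
lemma Cinf_Xh: "f \<in> Cinf \<Longrightarrow> g \<in> Cinf \<Longrightarrow> Xh f p g \<in> Cinf"
  unfolding Xh_def by (intro Cinf_diff Cinf_smul Cinf_dx Cinf_sscale Cinf_add Cinf_Dbar1 Cinf_Dbar2)
lemma Cinf_sum: "finite S \<Longrightarrow> (\<And>i. i \<in> S \<Longrightarrow> F i \<in> Cinf) \<Longrightarrow> (\<Sum>i\<in>S. F i) \<in> Cinf"
  by (induction S rule: finite_induct) (auto intro: Cinf_add Cinf_zero)

section \<open>The Grassmann algebra structure\<close>

lemma smul_add_left: "smul (F + G) H = smul F H + smul G H"
  by (rule sfun_eqI) (simp_all add: smul_def algebra_simps)
lemma smul_add_right: "smul H (F + G) = smul H F + smul H G"
  by (rule sfun_eqI) (simp_all add: smul_def algebra_simps)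
lemma smul_diff_left: "smul (F - G) H = smul F H - smul G H"
  by (rule sfun_eqI) (simp_all add: smul_def algebra_simps)
lemma smul_diff_right: "smul H (F - G) = smul H F - smul H G"
  by (rule sfun_eqI) (simp_all add: smul_def algebra_simps)
lemma smul_zero_left [simp]: "smul 0 H = 0"
  by (rule sfun_eqI) (simp_all add: smul_def)
lemma smul_zero_right [simp]: "smul H 0 = 0"
  by (rule sfun_eqI) (simp_all add: smul_def)
lemma smul_sscale_left: "smul (sscale c F) G = sscale c (smul F G)"
  by (rule sfun_eqI) (simp_all add: smul_def sscale_def algebra_simps)
lemma smul_sscale_right: "smul F (sscale c G) = sscale c (smul F G)"
  by (rule sfun_eqI) (simp_all add: smul_def sscale_def algebra_simps)
lemma smul_assoc: "smul (smul F G) H = smul F (smul G H)"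
  by (rule sfun_eqI) (simp_all add: smul_def algebra_simps)
lemma sscale_add: "sscale c (F + G) = sscale c F + sscale c G"
  by (rule sfun_eqI) (simp_all add: sscale_def algebra_simps)
lemma sscale_diff: "sscale c (F - G) = sscale c F - sscale c G"
  by (rule sfun_eqI) (simp_all add: sscale_def algebra_simps)
lemma sscale_sscale: "sscale c (sscale d F) = sscale (c * d) F"
  by (rule sfun_eqI) (simp_all add: sscale_def algebra_simps)
lemma sscale_one [simp]: "sscale 1 F = F"
  by (rule sfun_eqI) (simp_all add: sscale_def)
lemma sscale_zero [simp]: "sscale c 0 = 0"
  by (rule sfun_eqI) (simp_all add: sscale_def)

lemma additive_sum:
  fixes T :: "'a::comm_monoid_add \<Rightarrow> 'b::comm_monoid_add"
  assumes add: "\<And>x y. T (x + y) = T x + T y" and zero: "T 0 = 0"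
  shows "T (\<Sum>i\<in>S. F i) = (\<Sum>i\<in>S. T (F i))"
proof (induction S rule: infinite_finite_induct)
  case (infinite A) then show ?case by (simp add: zero)
next
  case empty then show ?case by (simp add: zero)
next
  case (insert x S) then show ?case by (simp add: add)
qed

lemma smul_sum_right: "smul H (\<Sum>i\<in>S. F i) = (\<Sum>i\<in>S. smul H (F i))"
  by (rule additive_sum[where T = "smul H"]) (simp_all add: smul_add_right)
lemma sscale_sum: "sscale c (\<Sum>i\<in>S. F i) = (\<Sum>i\<in>S. sscale c (F i))"
  by (rule additive_sum[where T = "sscale c"]) (simp_all add: sscale_add)

definition homog :: "bool \<Rightarrow> sfun \<Rightarrow> bool" where
  "homog p F \<longleftrightarrow> (\<forall>m n. (m \<noteq> n) \<noteq> p \<longrightarrow> F m n = 0)"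

lemma homog_False: "homog False F \<longleftrightarrow> F True False = 0 \<and> F False True = 0"
  unfolding homog_def by (metis (full_types))
lemma homog_True: "homog True F \<longleftrightarrow> F False False = 0 \<and> F True True = 0"
  unfolding homog_def by (metis (full_types))

lemma homogE:
  assumes "homog p F"
  obtains "p" "F False False = 0" "F True True = 0"
        | "\<not> p" "F True False = 0" "F False True = 0"
  using assms by (cases p) (auto simp: homog_False homog_True)

lemma smul_supercommute:
  assumes "homog p h" "homog r b"
  shows "smul h (smul b X) = sscale (psign (p \<and> r)) (smul b (smul h X))"
  using assms
  by (elim homogE) (rule sfun_eqI; simp add: smul_def sscale_def psign_def algebra_simps)+

lemma homog_evp: "homog False (evp F)"
  unfolding homog_False evp_def by simp
lemma homog_odp: "homog True (odp F)"
  unfolding homog_True odp_def by simp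
lemma homog_xi1: "homog True xi1"
  unfolding homog_True xi1_def by (simp add: fun_eq_iff)
lemma homog_xi2: "homog True xi2"
  unfolding homog_True xi2_def by (simp add: fun_eq_iff)
lemma homog_dx: "homog p F \<Longrightarrow> homog p (dx F)"
  unfolding homog_def dx_def by (auto simp: vderiv_zero)
lemma homog_dx_funpow: "homog p F \<Longrightarrow> homog p ((dx ^^ l) F)"
  by (induction l) (auto intro: homog_dx)
lemma homog_Dbar1: "homog p F \<Longrightarrow> homog (\<not> p) (Dbar1 F)"
  by (elim homogE; simp add: homog_False homog_True Dbar1_def smul_def dxi1_def xi1_def dx_def vderiv_zero)
     (simp_all add: fun_eq_iff)
lemma homog_Dbar2: "homog p F \<Longrightarrow> homog (\<not> p) (Dbar2 F)"
  by (elim homogE; simp add: homog_False homog_True Dbar2_def smul_def dxi2_def xi2_def dx_def vderiv_zero)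
     (simp_all add: fun_eq_iff)
lemma homog_monop: "homog p F \<Longrightarrow> homog (p \<noteq> (m \<noteq> n)) (monop l m n F)"
  unfolding monop_def
  by (rule homog_dx_funpow, cases m; cases n) (auto dest: homog_Dbar1 homog_Dbar2 homog_Dbar1[OF homog_Dbar2])

lemma evp_add: "evp (F + G) = evp F + evp G"
  unfolding evp_def by (auto simp: fun_eq_iff)
lemma odp_add: "odp (F + G) = odp F + odp G"
  unfolding odp_def by (auto simp: fun_eq_iff)
lemma evp_sum: "evp (\<Sum>i\<in>S. F i) = (\<Sum>i\<in>S. evp (F i))"
  by (rule additive_sum[where T = evp]) (simp add: evp_add, simp add: evp_def fun_eq_iff)
lemma odp_sum: "odp (\<Sum>i\<in>S. F i) = (\<Sum>i\<in>S. odp (F i))"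
  by (rule additive_sum[where T = odp]) (simp add: odp_add, simp add: odp_def fun_eq_iff)
lemma evp_plus_odp: "evp F + odp F = F"
  unfolding evp_def odp_def by (auto simp: fun_eq_iff)

lemma evp_smul_homog: "homog t X \<Longrightarrow> evp (smul a X) = smul (if t then odp a else evp a) X"
  by (elim homogE) (rule sfun_eqI; simp add: smul_def evp_def odp_def)+
lemma odp_smul_homog: "homog t X \<Longrightarrow> odp (smul a X) = smul (if t then evp a else odp a) X"
  by (elim homogE) (rule sfun_eqI; simp add: smul_def evp_def odp_def)+

section \<open>The derivations \<partial>_x, Dbar_1, Dbar_2\<close>

lemma dx_add: "F \<in> Cinf \<Longrightarrow> G \<in> Cinf \<Longrightarrow> dx (F + G) = dx F + dx G"
  by (rule sfun_eqI) (simp_all add: dx_def plus_fun_def vderiv_add Cinf_differentiable)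
lemma dx_diff: "F \<in> Cinf \<Longrightarrow> G \<in> Cinf \<Longrightarrow> dx (F - G) = dx F - dx G"
  by (rule sfun_eqI) (simp_all add: dx_def fun_diff_def vderiv_diff Cinf_differentiable)
lemma dx_sscale: "F \<in> Cinf \<Longrightarrow> dx (sscale c F) = sscale c (dx F)"
  by (rule sfun_eqI) (simp_all add: dx_def sscale_def vderiv_cmult Cinf_differentiable)
lemma dx_smul: "F \<in> Cinf \<Longrightarrow> G \<in> Cinf \<Longrightarrow> dx (smul F G) = smul (dx F) G + smul F (dx G)"
  by (rule sfun_eqI)
     (simp_all add: dx_def smul_def vderiv_add vderiv_diff vderiv_mult Cinf_differentiable algebra_simps)

lemma dx_zero: "dx 0 = 0"
  by (rule sfun_eqI) (simp_all add: dx_def vderiv_zero)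

lemma dx_sum:
  "finite S \<Longrightarrow> (\<And>i. i \<in> S \<Longrightarrow> F i \<in> Cinf) \<Longrightarrow> dx (\<Sum>i\<in>S. F i) = (\<Sum>i\<in>S. dx (F i))"
proof (induction S rule: finite_induct)
  case empty then show ?case by (simp only: sum.empty dx_zero)
next
  case (insert x S)
  have "dx (\<Sum>i\<in>insert x S. F i) = dx (F x + (\<Sum>i\<in>S. F i))"
    by (simp only: sum.insert[OF insert(1,2)])
  also have "\<dots> = dx (F x) + dx (\<Sum>i\<in>S. F i)"
    using insert by (intro dx_add Cinf_sum) auto
  also have "\<dots> = (\<Sum>i\<in>insert x S. dx (F i))"
    using insert by (simp add: sum.insert[OF insert(1,2)])
  finally show ?case .
qed

lemma dx_funpow_add: "F \<in> Cinf \<Longrightarrow> G \<in> Cinf \<Longrightarrow> (dx ^^ l) (F + G) = (dx ^^ l) F + (dx ^^ l) G"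
  by (induction l) (auto simp: dx_add Cinf_dx_funpow)
lemma dx_funpow_sscale: "F \<in> Cinf \<Longrightarrow> (dx ^^ l) (sscale c F) = sscale c ((dx ^^ l) F)"
  by (induction l) (auto simp: dx_sscale Cinf_dx_funpow)

lemma Dbar1_add: "F \<in> Cinf \<Longrightarrow> G \<in> Cinf \<Longrightarrow> Dbar1 (F + G) = Dbar1 F + Dbar1 G"
proof -
  have "dxi1 (F + G) = dxi1 F + dxi1 G" by (rule sfun_eqI) (simp_all add: dxi1_def)
  then show "F \<in> Cinf \<Longrightarrow> G \<in> Cinf \<Longrightarrow> ?thesis"
    unfolding Dbar1_def by (simp add: dx_add smul_add_right algebra_simps)
qed
lemma Dbar2_add: "F \<in> Cinf \<Longrightarrow> G \<in> Cinf \<Longrightarrow> Dbar2 (F + G) = Dbar2 F + Dbar2 G"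
proof -
  have "dxi2 (F + G) = dxi2 F + dxi2 G" by (rule sfun_eqI) (simp_all add: dxi2_def)
  then show "F \<in> Cinf \<Longrightarrow> G \<in> Cinf \<Longrightarrow> ?thesis"
    unfolding Dbar2_def by (simp add: dx_add smul_add_right algebra_simps)
qed
lemma Dbar1_sscale: "F \<in> Cinf \<Longrightarrow> Dbar1 (sscale c F) = sscale c (Dbar1 F)"
proof -
  have "dxi1 (sscale c F) = sscale c (dxi1 F)" by (rule sfun_eqI) (simp_all add: dxi1_def sscale_def)
  then show "F \<in> Cinf \<Longrightarrow> ?thesis"
    unfolding Dbar1_def by (simp add: dx_sscale smul_sscale_right sscale_diff)
qed
lemma Dbar2_sscale: "F \<in> Cinf \<Longrightarrow> Dbar2 (sscale c F) = sscale c (Dbar2 F)"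
proof -
  have "dxi2 (sscale c F) = sscale c (dxi2 F)" by (rule sfun_eqI) (simp_all add: dxi2_def sscale_def)
  then show "F \<in> Cinf \<Longrightarrow> ?thesis"
    unfolding Dbar2_def by (simp add: dx_sscale smul_sscale_right sscale_diff)
qed

lemma monop_add: "F \<in> Cinf \<Longrightarrow> G \<in> Cinf \<Longrightarrow> monop l m n (F + G) = monop l m n F + monop l m n G"
  unfolding monop_def
  by (cases m; cases n) (simp_all add: Dbar1_add Dbar2_add dx_funpow_add Cinf_Dbar1 Cinf_Dbar2 Cinf_add)
lemma monop_sscale: "F \<in> Cinf \<Longrightarrow> monop l m n (sscale c F) = sscale c (monop l m n F)"
  unfolding monop_def
  by (cases m; cases n)
     (simp_all add: Dbar1_sscale Dbar2_sscale dx_funpow_sscale Cinf_Dbar1 Cinf_Dbar2 Cinf_sscale)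
lemma monop_Suc: "monop (Suc l) m n F = dx (monop l m n F)"
  unfolding monop_def by simp
lemma monop_0: "monop 0 False False F = F" "monop 0 True False F = Dbar1 F"
   "monop 0 False True F = Dbar2 F" "monop 0 True True F = Dbar1 (Dbar2 F)"
  unfolding monop_def by simp_all

lemma Dbar1_smul:
  assumes "F \<in> Cinf" "G \<in> Cinf" "homog p F"
  shows "Dbar1 (smul F G) = smul (Dbar1 F) G + sscale (psign p) (smul F (Dbar1 G))"
proof -
  have dxi: "dxi1 (smul F G) = smul (dxi1 F) G + sscale (psign p) (smul F (dxi1 G))"
    using assms(3)
    by (elim homogE) (rule sfun_eqI; simp add: smul_def sscale_def dxi1_def psign_def algebra_simps)+
  have comm: "smul xi1 (smul F (dx G)) = sscale (psign p) (smul F (smul xi1 (dx G)))"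
    using smul_supercommute[OF homog_xi1 assms(3)] by simp
  show ?thesis
    unfolding Dbar1_def dx_smul[OF assms(1,2)] dxi smul_add_right comm
    unfolding smul_assoc[symmetric] smul_diff_left smul_diff_right sscale_diff
    by (simp add: algebra_simps)
qed

lemma Dbar2_smul:
  assumes "F \<in> Cinf" "G \<in> Cinf" "homog p F"
  shows "Dbar2 (smul F G) = smul (Dbar2 F) G + sscale (psign p) (smul F (Dbar2 G))"
proof -
  have dxi: "dxi2 (smul F G) = smul (dxi2 F) G + sscale (psign p) (smul F (dxi2 G))"
    using assms(3)
    by (elim homogE) (rule sfun_eqI; simp add: smul_def sscale_def dxi2_def psign_def algebra_simps)+
  have comm: "smul xi2 (smul F (dx G)) = sscale (psign p) (smul F (smul xi2 (dx G)))"
    using smul_supercommute[OF homog_xi2 assms(3)] by simp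
  show ?thesis
    unfolding Dbar2_def dx_smul[OF assms(1,2)] dxi smul_add_right comm
    unfolding smul_assoc[symmetric] smul_diff_left smul_diff_right sscale_diff
    by (simp add: algebra_simps)
qed

section \<open>Operators of bounded weight\<close>

text \<open>The monomial \<partial>_x^l Dbar_1^m Dbar_2^n has weight 2l + m + n, twice its order. Thus
  Dord j consists of the operators of weight < Suc j, and Dlow j of those of weight < j.\<close>

type_synonym mono_index = "nat \<times> bool \<times> bool"

definition weight :: "mono_index \<Rightarrow> nat" where
  "weight i = (case i of (l, m, n) \<Rightarrow> 2 * l + of_bool m + of_bool n)"

definition monomial :: "mono_index \<Rightarrow> sop" where
  "monomial i = (case i of (l, m, n) \<Rightarrow> monop l m n)"

definition mono_parity :: "mono_index \<Rightarrow> bool" where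
  "mono_parity i = (case i of (l, m, n) \<Rightarrow> m \<noteq> n)"

definition weight_below :: "nat \<Rightarrow> mono_index set" where
  "weight_below w = {i. weight i < w}"

definition weight_less :: "nat \<Rightarrow> sop \<Rightarrow> bool" where
  "weight_less w X \<longleftrightarrow> (\<exists>a. (\<forall>i. a i \<in> Cinf) \<and>
     (\<forall>g\<in>Cinf. X g = (\<Sum>i\<in>weight_below w. smul (a i) (monomial i g))))"

lemma finite_weight_below: "finite (weight_below w)"
proof (rule finite_subset)
  show "weight_below w \<subseteq> {..<w} \<times> (UNIV :: (bool \<times> bool) set)"
    by (auto simp: weight_below_def weight_def)
qed simp

lemma weight_below_mono: "w \<le> w' \<Longrightarrow> weight_below w \<subseteq> weight_below w'"
  unfolding weight_below_def by auto

lemma Cinf_monomial: "g \<in> Cinf \<Longrightarrow> monomial i g \<in> Cinf"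
  unfolding monomial_def by (cases i rule: prod_cases3) (simp add: Cinf_monop)
lemma monomial_add: "F \<in> Cinf \<Longrightarrow> G \<in> Cinf \<Longrightarrow> monomial i (F + G) = monomial i F + monomial i G"
  unfolding monomial_def by (cases i rule: prod_cases3) (simp add: monop_add)
lemma monomial_sscale: "F \<in> Cinf \<Longrightarrow> monomial i (sscale c F) = sscale c (monomial i F)"
  unfolding monomial_def by (cases i rule: prod_cases3) (simp add: monop_sscale)
lemma homog_monomial: "homog p F \<Longrightarrow> homog (p \<noteq> mono_parity i) (monomial i F)"
  unfolding monomial_def mono_parity_def
  by (cases i rule: prod_cases3) (use homog_monop in fastforce)

lemma weight_less_cong: "weight_less w X \<Longrightarrow> (\<And>g. g \<in> Cinf \<Longrightarrow> Y g = X g) \<Longrightarrow> weight_less w Y"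
  unfolding weight_less_def by simp

lemma weight_less_zero: "weight_less w (\<lambda>g. 0)"
  unfolding weight_less_def by (rule exI[of _ "\<lambda>i. 0"]) (simp add: Cinf_zero)

lemma weight_less_add:
  assumes "weight_less w X" "weight_less w Y"
  shows "weight_less w (\<lambda>g. X g + Y g)"
proof -
  obtain a b where "\<forall>i. a i \<in> Cinf" "\<forall>g\<in>Cinf. X g = (\<Sum>i\<in>weight_below w. smul (a i) (monomial i g))"
    "\<forall>i. b i \<in> Cinf" "\<forall>g\<in>Cinf. Y g = (\<Sum>i\<in>weight_below w. smul (b i) (monomial i g))"
    using assms unfolding weight_less_def by blast
  then
  show ?thesis unfolding weight_less_def
    by (intro exI[of _ "\<lambda>i. a i + b i"]) (simp add: Cinf_add smul_add_left sum.distrib)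
qed

lemma weight_less_diff:
  assumes "weight_less w X" "weight_less w Y"
  shows "weight_less w (\<lambda>g. X g - Y g)"
proof -
  obtain a b where "\<forall>i. a i \<in> Cinf" "\<forall>g\<in>Cinf. X g = (\<Sum>i\<in>weight_below w. smul (a i) (monomial i g))"
    "\<forall>i. b i \<in> Cinf" "\<forall>g\<in>Cinf. Y g = (\<Sum>i\<in>weight_below w. smul (b i) (monomial i g))"
    using assms unfolding weight_less_def by blast
  then
  show ?thesis unfolding weight_less_def
    by (intro exI[of _ "\<lambda>i. a i - b i"]) (simp add: Cinf_diff smul_diff_left sum_subtractf)
qed

lemma weight_less_sscale: "weight_less w X \<Longrightarrow> weight_less w (\<lambda>g. sscale c (X g))"
  unfolding weight_less_def
  by (elim exE, rule exI[of _ "\<lambda>i. sscale c (a i)" for a]) (auto simp: Cinf_sscale smul_sscale_left sscale_sum)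

lemma weight_less_smul: "weight_less w X \<Longrightarrow> b \<in> Cinf \<Longrightarrow> weight_less w (\<lambda>g. smul b (X g))"
  unfolding weight_less_def
  by (elim exE, rule exI[of _ "\<lambda>i. smul b (a i)" for a]) (auto simp: Cinf_smul smul_assoc smul_sum_right)

lemma weight_less_mono:
  assumes "weight_less w X" "w \<le> w'"
  shows "weight_less w' X"
proof -
  obtain a where a: "\<forall>i. a i \<in> Cinf"
    and X: "\<forall>g\<in>Cinf. X g = (\<Sum>i\<in>weight_below w. smul (a i) (monomial i g))"
    using assms(1) unfolding weight_less_def by blast
  let ?a' = "\<lambda>i. if i \<in> weight_below w then a i else 0"
  have "(\<Sum>i\<in>weight_below w'. smul (?a' i) (monomial i g)) = (\<Sum>i\<in>weight_below w. smul (?a' i) (monomial i g))" for g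
    by (rule sum.mono_neutral_right[OF finite_weight_below weight_below_mono[OF assms(2)]]) auto
  also have "\<dots> g = (\<Sum>i\<in>weight_below w. smul (a i) (monomial i g))" for g
    by (rule sum.cong) auto
  finally have "(\<Sum>i\<in>weight_below w'. smul (?a' i) (monomial i g)) = (\<Sum>i\<in>weight_below w. smul (a i) (monomial i g))" for g .
  then show ?thesis unfolding weight_less_def
    by (intro exI[of _ ?a']) (simp add: a X Cinf_zero)
qed

lemma weight_less_monomial:
  assumes "weight i < w" "b \<in> Cinf"
  shows "weight_less w (\<lambda>g. smul b (monomial i g))"
proof -
  have "(\<Sum>k\<in>weight_below w. smul (if k = i then b else 0) (monomial k g))
      = (\<Sum>k\<in>weight_below w. if k = i then smul b (monomial k g) else 0)" for g
    by (rule sum.cong) auto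
  also have "\<dots> g = smul b (monomial i g)" for g
    using assms(1) finite_weight_below by (simp add: weight_below_def)
  finally have "(\<Sum>k\<in>weight_below w. smul (if k = i then b else 0) (monomial k g)) = smul b (monomial i g)" for g .
  then show ?thesis unfolding weight_less_def
    by (intro exI[of _ "\<lambda>k. if k = i then b else 0"]) (simp add: assms(2) Cinf_zero)
qed

lemma weight_less_sum:
  "finite K \<Longrightarrow> (\<And>k. k \<in> K \<Longrightarrow> weight_less w (X k)) \<Longrightarrow> weight_less w (\<lambda>g. \<Sum>k\<in>K. X k g)"
proof (induction K rule: finite_induct)
  case empty then show ?case by (simp only: sum.empty weight_less_zero)
next
  case (insert x K)
  then have "weight_less w (\<lambda>g. X x g + (\<Sum>k\<in>K. X k g))" by (intro weight_less_add) auto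
  then show ?case by (simp only: sum.insert[OF insert(1,2)])
qed

lemma weight_less_dx:
  assumes "weight_less w X"
  shows "weight_less (w + 2) (\<lambda>g. dx (X g))"
proof -
  obtain a where a: "\<forall>i. a i \<in> Cinf"
    and X: "\<forall>g\<in>Cinf. X g = (\<Sum>i\<in>weight_below w. smul (a i) (monomial i g))"
    using assms unfolding weight_less_def by blast
  let ?raise = "\<lambda>i. case i of (l, m, n) \<Rightarrow> (Suc l, m, n)"
  have raise: "weight (?raise i) = weight i + 2" "monomial (?raise i) g = dx (monomial i g)" for i g
    by (cases i rule: prod_cases3; simp add: weight_def monomial_def monop_Suc)+
  have "weight_less (w + 2)
      (\<lambda>g. \<Sum>i\<in>weight_below w. smul (dx (a i)) (monomial i g) + smul (a i) (monomial (?raise i) g))"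
    using a raise(1) by (intro weight_less_sum[OF finite_weight_below] weight_less_add weight_less_monomial Cinf_dx)
      (auto simp: weight_below_def)
  then show ?thesis
  proof (rule weight_less_cong)
    fix g assume g: "g \<in> Cinf"
    have "dx (X g) = (\<Sum>i\<in>weight_below w. dx (smul (a i) (monomial i g)))"
      using X g a by (simp add: dx_sum[OF finite_weight_below] Cinf_smul Cinf_monomial del: split_paired_All)
    also have "\<dots> = (\<Sum>i\<in>weight_below w. smul (dx (a i)) (monomial i g) + smul (a i) (monomial (?raise i) g))"
      using g a by (simp only: dx_smul Cinf_monomial raise(2))
    finally show "dx (X g) = (\<Sum>i\<in>weight_below w. smul (dx (a i)) (monomial i g) + smul (a i) (monomial (?raise i) g))" .
  qed
qed

section \<open>Supercommutators with multiplication operators\<close>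

definition supercomm :: "sfun \<Rightarrow> bool \<Rightarrow> sop \<Rightarrow> bool \<Rightarrow> sop" where
  "supercomm h p B q = (\<lambda>g. smul h (B g) - sscale (psign (p \<and> q)) (B (smul h g)))"

lemma diff_sscale_psign_add: "X - sscale (psign p) (Y + sscale (psign p) X) = sscale (- psign p) Y"
  by (cases p; rule sfun_eqI; simp add: sscale_def psign_def)

lemma supercomm_Dbar1:
  assumes h: "h \<in> Cinf" "homog p h"
  shows "weight_less 1 (supercomm h p Dbar1 True)"
proof -
  have "weight_less 1 (\<lambda>g. smul (sscale (- psign p) (Dbar1 h)) (monomial (0, False, False) g))"
    by (rule weight_less_monomial) (auto simp: weight_def h Cinf_sscale Cinf_Dbar1)
  then show ?thesis
  proof (rule weight_less_cong)
    fix g assume g: "g \<in> Cinf"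
    show "supercomm h p Dbar1 True g = smul (sscale (- psign p) (Dbar1 h)) (monomial (0, False, False) g)"
      unfolding supercomm_def Dbar1_smul[OF h(1) g h(2)]
      by (simp add: monomial_def monop_0 smul_sscale_left diff_sscale_psign_add)
  qed
qed

lemma supercomm_Dbar2:
  assumes h: "h \<in> Cinf" "homog p h"
  shows "weight_less 1 (supercomm h p Dbar2 True)"
proof -
  have "weight_less 1 (\<lambda>g. smul (sscale (- psign p) (Dbar2 h)) (monomial (0, False, False) g))"
    by (rule weight_less_monomial) (auto simp: weight_def h Cinf_sscale Cinf_Dbar2)
  then show ?thesis
  proof (rule weight_less_cong)
    fix g assume g: "g \<in> Cinf"
    show "supercomm h p Dbar2 True g = smul (sscale (- psign p) (Dbar2 h)) (monomial (0, False, False) g)"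
      unfolding supercomm_def Dbar2_smul[OF h(1) g h(2)]
      by (simp add: monomial_def monop_0 smul_sscale_left diff_sscale_psign_add)
  qed
qed

lemma supercomm_Dbar1_Dbar2:
  assumes h: "h \<in> Cinf" "homog p h"
  shows "weight_less 2 (supercomm h p (\<lambda>g. Dbar1 (Dbar2 g)) False)"
proof -
  have "weight_less 2 (\<lambda>g. smul (sscale (- 1) (Dbar1 (Dbar2 h))) (monomial (0, False, False) g)
     + smul (sscale (- psign (\<not> p)) (Dbar2 h)) (monomial (0, True, False) g)
     + smul (sscale (- psign p) (Dbar1 h)) (monomial (0, False, True) g))"
    by (intro weight_less_add weight_less_monomial)
      (auto simp: weight_def h Cinf_sscale Cinf_Dbar1 Cinf_Dbar2)
  then show ?thesis
  proof (rule weight_less_cong)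
    fix g assume g: "g \<in> Cinf"
    have Dh: "Dbar2 h \<in> Cinf" "Dbar2 g \<in> Cinf" using h g by (simp_all add: Cinf_Dbar2)
    have in_Cinf: "smul (Dbar2 h) g \<in> Cinf" "smul h (Dbar2 g) \<in> Cinf"
      using h g Dh by (simp_all add: Cinf_smul)
    have leibniz: "Dbar1 (Dbar2 (smul h g)) = smul (Dbar1 (Dbar2 h)) g
        + sscale (psign (\<not> p)) (smul (Dbar2 h) (Dbar1 g))
        + sscale (psign p) (smul (Dbar1 h) (Dbar2 g) + sscale (psign p) (smul h (Dbar1 (Dbar2 g))))"
      unfolding Dbar2_smul[OF h(1) g h(2)] Dbar1_add[OF in_Cinf(1) Cinf_sscale[OF in_Cinf(2)]]
        Dbar1_sscale[OF in_Cinf(2)] Dbar1_smul[OF Dh(1) g homog_Dbar2[OF h(2)]]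
        Dbar1_smul[OF h(1) Dh(2) h(2)] ..
    show "supercomm h p (\<lambda>g. Dbar1 (Dbar2 g)) False g =
        smul (sscale (- 1) (Dbar1 (Dbar2 h))) (monomial (0, False, False) g)
      + smul (sscale (- psign (\<not> p)) (Dbar2 h)) (monomial (0, True, False) g)
      + smul (sscale (- psign p) (Dbar1 h)) (monomial (0, False, True) g)"
      unfolding supercomm_def monomial_def prod.case monop_0 leibniz smul_sscale_left
      by (cases p; rule sfun_eqI; simp add: sscale_def psign_def)
  qed
qed

lemma supercomm_monomial:
  assumes h: "h \<in> Cinf" "homog p h"
  shows "weight_less (weight i) (supercomm h p (monomial i) (mono_parity i))"
proof (cases i rule: prod_cases3)
  case (fields l m n)
  have "weight_less (weight (l, m, n)) (supercomm h p (monop l m n) (m \<noteq> n))"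
  proof (induction l)
    case 0
    show ?case
    proof (cases m; cases n)
      assume "\<not> m" "\<not> n"
      then show ?thesis
        by (intro weight_less_cong[OF weight_less_zero]) (simp add: supercomm_def monop_0 psign_def fun_eq_iff)
    qed (use supercomm_Dbar1[OF h] supercomm_Dbar2[OF h] supercomm_Dbar1_Dbar2[OF h]
          in \<open>simp_all add: weight_def monop_0 numeral_2_eq_2\<close>)
  next
    case (Suc l)
    have lower: "weight_less (weight (l, m, n) + 2)
        (\<lambda>g. dx (supercomm h p (monop l m n) (m \<noteq> n) g) - smul (dx h) (monomial (l, m, n) g))"
      using Suc h by (intro weight_less_diff weight_less_dx weight_less_monomial Cinf_dx) auto
    have weight_Suc: "weight (Suc l, m, n) = weight (l, m, n) + 2" by (simp add: weight_def)
    show ?case unfolding weight_Suc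
    proof (rule weight_less_cong[OF lower])
      fix g assume g: "g \<in> Cinf"
      have in_Cinf: "monop l m n g \<in> Cinf" "monop l m n (smul h g) \<in> Cinf"
        using g h by (simp_all add: Cinf_monop Cinf_smul)
      show "supercomm h p (monop (Suc l) m n) (m \<noteq> n) g =
          dx (supercomm h p (monop l m n) (m \<noteq> n) g) - smul (dx h) (monomial (l, m, n) g)"
        unfolding supercomm_def monop_Suc monomial_def prod.case
        by (simp add: dx_diff dx_sscale dx_smul Cinf_smul Cinf_sscale h in_Cinf algebra_simps)
    qed
  qed
  then show ?thesis using fields by (simp add: monomial_def mono_parity_def)
qed

lemma smul_supercomm_smul:
  assumes "homog p h" "homog (q \<noteq> t) b"
  shows "smul h (smul b X) - sscale (psign (p \<and> q)) (smul b Y)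
       = sscale (psign (p \<and> (q \<noteq> t))) (smul b (smul h X - sscale (psign (p \<and> t)) Y))"
  unfolding smul_supercommute[OF assms] smul_diff_right smul_sscale_right sscale_diff sscale_sscale
  by (cases p; cases q; cases t; simp add: psign_def)

text \<open>The hypothesis on b says that B is homogeneous of parity q.\<close>

lemma weight_less_supercomm:
  assumes B: "\<forall>g\<in>Cinf. B g = (\<Sum>i\<in>weight_below (Suc j). smul (b i) (monomial i g))"
    and b: "\<forall>i. b i \<in> Cinf" "\<forall>i. homog (q \<noteq> mono_parity i) (b i)"
    and h: "h \<in> Cinf" "homog p h"
  shows "weight_less j (supercomm h p B q)"
proof -
  have "weight_less j (supercomm h p (monomial i) (mono_parity i))" if "i \<in> weight_below (Suc j)" for i
    using weight_less_mono[OF supercomm_monomial[OF h]] that by (simp add: weight_below_def)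
  then have "weight_less j (\<lambda>g. \<Sum>i\<in>weight_below (Suc j). sscale (psign (p \<and> (q \<noteq> mono_parity i)))
      (smul (b i) (supercomm h p (monomial i) (mono_parity i) g)))"
    using b by (intro weight_less_sum[OF finite_weight_below] weight_less_sscale weight_less_smul) auto
  then show ?thesis
  proof (rule weight_less_cong)
    fix g assume g: "g \<in> Cinf"
    have "supercomm h p B q g = (\<Sum>i\<in>weight_below (Suc j). smul h (smul (b i) (monomial i g))
        - sscale (psign (p \<and> q)) (smul (b i) (monomial i (smul h g))))"
      using B g h by (simp add: supercomm_def Cinf_smul smul_sum_right sscale_sum sum_subtractf)
    also have "\<dots> = (\<Sum>i\<in>weight_below (Suc j). sscale (psign (p \<and> (q \<noteq> mono_parity i)))
        (smul (b i) (supercomm h p (monomial i) (mono_parity i) g)))"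
      using b h unfolding supercomm_def by (intro sum.cong refl smul_supercomm_smul) auto
    finally show "supercomm h p B q g = \<dots>" .
  qed
qed

lemma parity_parts_smul_monomial:
  assumes g: "g \<in> Cinf"
  shows "evp (smul a (monomial i (evp g))) + odp (smul a (monomial i (odp g)))
       = smul (if mono_parity i then odp a else evp a) (monomial i g)"
    and "odp (smul a (monomial i (evp g))) + evp (smul a (monomial i (odp g)))
       = smul (if mono_parity i then evp a else odp a) (monomial i g)"
proof -
  have ev: "homog (mono_parity i) (monomial i (evp g))"
    using homog_monomial[OF homog_evp] by simp
  have od: "homog (\<not> mono_parity i) (monomial i (odp g))"
    using homog_monomial[OF homog_odp] by simp
  have split: "smul c (monomial i (evp g)) + smul c (monomial i (odp g)) = smul c (monomial i g)" for c
    unfolding smul_add_right[symmetric] monomial_add[OF Cinf_evp[OF g] Cinf_odp[OF g], symmetric] evp_plus_odp ..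
  show "evp (smul a (monomial i (evp g))) + odp (smul a (monomial i (odp g)))
      = smul (if mono_parity i then odp a else evp a) (monomial i g)"
    unfolding evp_smul_homog[OF ev] odp_smul_homog[OF od] split[symmetric] by simp
  show "odp (smul a (monomial i (evp g))) + evp (smul a (monomial i (odp g)))
      = smul (if mono_parity i then evp a else odp a) (monomial i g)"
    unfolding odp_smul_homog[OF ev] evp_smul_homog[OF od] split[symmetric] by simp
qed

lemma op_ev_sum_monomials:
  assumes "\<forall>g\<in>Cinf. A g = (\<Sum>i\<in>S. smul (a i) (monomial i g))"
  shows "\<forall>g\<in>Cinf. op_ev A g = (\<Sum>i\<in>S. smul (if mono_parity i then odp (a i) else evp (a i)) (monomial i g))"
proof
  fix g assume g: "g \<in> Cinf"
  have "op_ev A g = evp (A (evp g)) + odp (A (odp g))"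
    using g by (simp add: op_ev_def restr_def)
  also have "\<dots> = (\<Sum>i\<in>S. evp (smul (a i) (monomial i (evp g))) + odp (smul (a i) (monomial i (odp g))))"
    using assms g by (simp add: Cinf_evp Cinf_odp evp_sum odp_sum sum.distrib)
  finally show "op_ev A g = (\<Sum>i\<in>S. smul (if mono_parity i then odp (a i) else evp (a i)) (monomial i g))"
    by (simp only: parity_parts_smul_monomial(1)[OF g])
qed

lemma op_od_sum_monomials:
  assumes "\<forall>g\<in>Cinf. A g = (\<Sum>i\<in>S. smul (a i) (monomial i g))"
  shows "\<forall>g\<in>Cinf. op_od A g = (\<Sum>i\<in>S. smul (if mono_parity i then evp (a i) else odp (a i)) (monomial i g))"
proof
  fix g assume g: "g \<in> Cinf"
  have "op_od A g = odp (A (evp g)) + evp (A (odp g))"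
    using g by (simp add: op_od_def restr_def)
  also have "\<dots> = (\<Sum>i\<in>S. odp (smul (a i) (monomial i (evp g))) + evp (smul (a i) (monomial i (odp g))))"
    using assms g by (simp add: Cinf_evp Cinf_odp evp_sum odp_sum sum.distrib)
  finally show "op_od A g = (\<Sum>i\<in>S. smul (if mono_parity i then evp (a i) else odp (a i)) (monomial i g))"
    by (simp only: parity_parts_smul_monomial(2)[OF g])
qed

lemma sum_monomials_linear:
  assumes B: "\<forall>g\<in>Cinf. B g = (\<Sum>i\<in>S. smul (b i) (monomial i g))" and x: "x \<in> Cinf" and y: "y \<in> Cinf"
  shows "B (x + sscale c y) = B x + sscale c (B y)"
proof -
  have "x + sscale c y \<in> Cinf" using x y by (simp add: Cinf_add Cinf_sscale)
  then show ?thesis using B x y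
    by (simp add: monomial_add monomial_sscale Cinf_sscale smul_add_right smul_sscale_right
        sum.distrib sscale_sum)
qed

section \<open>The two actions differ by a supercommutator\<close>

lemma Lact_h_diff:
  assumes lin: "\<And>x y c. x \<in> Cinf \<Longrightarrow> y \<in> Cinf \<Longrightarrow> B (x + sscale c y) = B x + sscale c (B y)"
    and f: "f \<in> Cinf" and g: "g \<in> Cinf" and eq: "mu - lam = mu' - lam'"
  shows "Lact_h lam mu f p B q g - Lact_h lam' mu' f p B q g = sscale (mu - mu') (supercomm (dx f) p B q g)"
proof -
  have "Xh f p g \<in> Cinf" "smul (dx f) g \<in> Cinf" using f g by (simp_all add: Cinf_Xh Cinf_smul Cinf_dx)
  then have B_Lh: "B (Lh l f p g) = B (Xh f p g) + sscale l (B (smul (dx f) g))" for l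
    unfolding Lh_def by (rule lin)
  have mu': "mu' = mu - lam + lam'" using eq by (simp add: algebra_simps)
  show ?thesis
    unfolding Lact_h_def restr_def supercomm_def using g
    by (simp add: B_Lh, simp only: Lh_def mu') (rule sfun_eqI; simp add: sscale_def algebra_simps)+
qed

lemma Lact_diff:
  assumes lin_ev: "\<And>x y c. x \<in> Cinf \<Longrightarrow> y \<in> Cinf \<Longrightarrow> op_ev A (x + sscale c y) = op_ev A x + sscale c (op_ev A y)"
    and lin_od: "\<And>x y c. x \<in> Cinf \<Longrightarrow> y \<in> Cinf \<Longrightarrow> op_od A (x + sscale c y) = op_od A x + sscale c (op_od A y)"
    and f: "f \<in> Cinf" and eq: "mu - lam = mu' - lam'"
  shows "Lact lam mu f A - Lact lam' mu' f A = restr (\<lambda>g. sscale (mu - mu')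
     (supercomm (dx (evp f)) False (op_ev A) False g + supercomm (dx (evp f)) False (op_od A) True g
    + supercomm (dx (odp f)) True (op_ev A) False g + supercomm (dx (odp f)) True (op_od A) True g))"
proof
  fix g
  show "(Lact lam mu f A - Lact lam' mu' f A) g = restr (\<lambda>g. sscale (mu - mu')
     (supercomm (dx (evp f)) False (op_ev A) False g + supercomm (dx (evp f)) False (op_od A) True g
    + supercomm (dx (odp f)) True (op_ev A) False g + supercomm (dx (odp f)) True (op_od A) True g)) g"
  proof (cases "g \<in> Cinf")
    case True
    have fe: "evp f \<in> Cinf" "odp f \<in> Cinf" using f by (simp_all add: Cinf_evp Cinf_odp)
    have "(Lact lam mu f A - Lact lam' mu' f A) g =
        (Lact_h lam mu (evp f) False (op_ev A) False g - Lact_h lam' mu' (evp f) False (op_ev A) False g)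
      + (Lact_h lam mu (evp f) False (op_od A) True g - Lact_h lam' mu' (evp f) False (op_od A) True g)
      + (Lact_h lam mu (odp f) True (op_ev A) False g - Lact_h lam' mu' (odp f) True (op_ev A) False g)
      + (Lact_h lam mu (odp f) True (op_od A) True g - Lact_h lam' mu' (odp f) True (op_od A) True g)"
      unfolding Lact_def by (simp add: fun_eq_iff algebra_simps)
    then show ?thesis
      using True unfolding restr_def sscale_add
      by (simp only: Lact_h_diff[OF lin_ev fe(1) True eq] Lact_h_diff[OF lin_od fe(1) True eq]
          Lact_h_diff[OF lin_ev fe(2) True eq] Lact_h_diff[OF lin_od fe(2) True eq] if_True)
  qed (simp add: Lact_def Lact_h_def restr_def)
qed

section \<open>The filtration\<close>

lemma Dord_sum_monomials:
  assumes "A \<in> Dord j"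
  obtains a where "\<forall>i. a i \<in> Cinf" "\<forall>g\<in>Cinf. A g = (\<Sum>i\<in>weight_below (Suc j). smul (a i) (monomial i g))"
proof -
  obtain a where a: "\<forall>l m n. a l m n \<in> Cinf" and A: "A = restr (\<lambda>g. \<Sum>(l, m, n) \<in> {(l, m, n).
      2 * l + of_bool m + of_bool n \<le> j}. smul (a l m n) (monop l m n g))"
    using assms unfolding Dord_def by blast
  have "{(l, m, n). 2 * l + of_bool m + of_bool n \<le> j} = weight_below (Suc j)"
    by (auto simp: weight_below_def weight_def)
  then have "\<forall>g\<in>Cinf. A g = (\<Sum>i\<in>weight_below (Suc j). smul (case_prod (case_prod \<circ> a) i) (monomial i g))"
    unfolding A restr_def monomial_def by (simp add: case_prod_unfold)
  moreover have "\<forall>i. case_prod (case_prod \<circ> a) i \<in> Cinf" using a by auto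
  ultimately show ?thesis by (rule that[rotated])
qed

lemma weight_less_Dlow:
  assumes "weight_less w X"
  shows "restr X \<in> Dlow w"
proof -
  obtain a where a: "\<forall>i. a i \<in> Cinf"
    and X: "\<forall>g\<in>Cinf. X g = (\<Sum>i\<in>weight_below w. smul (a i) (monomial i g))"
    using assms unfolding weight_less_def by blast
  show ?thesis
  proof (cases w)
    case 0
    then have "restr X = 0" using X by (auto simp: restr_def weight_below_def fun_eq_iff)
    then show ?thesis using 0 by (simp add: Dlow_def)
  next
    case (Suc j)
    have "{(l, m, n). 2 * l + of_bool m + of_bool n \<le> j} = weight_below w"
      using Suc by (auto simp: weight_below_def weight_def)
    then have "restr X = restr (\<lambda>g. \<Sum>(l, m, n) \<in> {(l, m, n). 2 * l + of_bool m + of_bool n \<le> j}.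
        smul (a (l, m, n)) (monop l m n g))"
      using X by (auto simp: restr_def monomial_def case_prod_unfold fun_eq_iff)
    then have "restr X \<in> Dord j"
      unfolding Dord_def using a by (auto intro!: exI[of _ "\<lambda>l m n. a (l, m, n)"])
    then show ?thesis using Suc by (simp add: Dlow_def)
  qed
qed

lemma Lact_diff_Dlow:
  assumes A: "A \<in> Dord j" and f: "f \<in> Cinf" and eq: "mu - lam = mu' - lam'"
  shows "Lact lam mu f A - Lact lam' mu' f A \<in> Dlow j"
proof -
  obtain a where a: "\<forall>i. a i \<in> Cinf" and A: "\<forall>g\<in>Cinf. A g = (\<Sum>i\<in>weight_below (Suc j). smul (a i) (monomial i g))"
    using A by (rule Dord_sum_monomials)
  note ev = op_ev_sum_monomials[OF A] and od = op_od_sum_monomials[OF A]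
  have coeffs: "\<forall>i. (if mono_parity i then odp (a i) else evp (a i)) \<in> Cinf"
    "\<forall>i. homog (False \<noteq> mono_parity i) (if mono_parity i then odp (a i) else evp (a i))"
    "\<forall>i. (if mono_parity i then evp (a i) else odp (a i)) \<in> Cinf"
    "\<forall>i. homog (True \<noteq> mono_parity i) (if mono_parity i then evp (a i) else odp (a i))"
    using a by (simp_all add: Cinf_evp Cinf_odp homog_evp homog_odp)
  have h: "dx (evp f) \<in> Cinf" "homog False (dx (evp f))" "dx (odp f) \<in> Cinf" "homog True (dx (odp f))"
    using f by (simp_all add: Cinf_dx Cinf_evp Cinf_odp homog_dx homog_evp homog_odp)
  have "weight_less j (\<lambda>g. sscale (mu - mu')
     (supercomm (dx (evp f)) False (op_ev A) False g + supercomm (dx (evp f)) False (op_od A) True g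
    + supercomm (dx (odp f)) True (op_ev A) False g + supercomm (dx (odp f)) True (op_od A) True g))"
    by (intro weight_less_sscale weight_less_add weight_less_supercomm[OF ev coeffs(1,2)]
        weight_less_supercomm[OF od coeffs(3,4)] h)
  moreover have "Lact lam mu f A - Lact lam' mu' f A = restr (\<lambda>g. sscale (mu - mu')
     (supercomm (dx (evp f)) False (op_ev A) False g + supercomm (dx (evp f)) False (op_od A) True g
    + supercomm (dx (odp f)) True (op_ev A) False g + supercomm (dx (odp f)) True (op_od A) True g))"
    by (rule Lact_diff[OF sum_monomials_linear[OF ev] sum_monomials_linear[OF od] f eq])
  ultimately show ?thesis by (simp add: weight_less_Dlow)
qed

lemma grel_refl: "grel Q Q"
proof -
  have "restr (\<lambda>g. 0) = 0" by (simp add: restr_def fun_eq_iff)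
  then show ?thesis
    unfolding grel_def using weight_less_Dlow[OF weight_less_zero] by simp
qed

theorem corollary3p7:
  fixes lam mu lam' mu' :: complex
  assumes "mu - lam = mu' - lam'"
  shows "gr_iso lam mu lam' mu'"
  unfolding gr_iso_def
proof (intro exI[of _ "\<lambda>Q. Q"] conjI ballI allI)
  fix f Q assume "f \<in> Cinf" "Q \<in> GR"
  then show "grel (gr_act lam mu f Q) (gr_act lam' mu' f Q)"
    using Lact_diff_Dlow assms by (simp add: grel_def gr_act_def GR_def)
qed (use grel_refl in auto)

end
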